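(* Let $\Gamma=\mathsf{PSL}_2(\mathbb{Z})=\langle U,S\mid U^3,S^2\rangle$, with $U$ of order $3$ and $S$ of order $2$. Call a word over $\{U,S\}$ an $\mathbf a$-word if it equals the identity in $\Gamma$, contains no factor $SS$, and has the form $SUBUS$ with $B$ a nonempty word over $\{U,S\}$. Call an $\mathbf a$-word primitive if it cannot be written as $A_1U^{\alpha_1}A_2U^{\alpha_2}\cdots U^{\alpha_{s-1}}A_s$ with $s\ge2$, all $\alpha_i\ge1$, and each $A_i$ an $\mathbf a$-word. For $n,m\ge0$ let $a(n,m)$ (resp. $\mathfrak a(n,m)$) be the number of $\mathbf a$-words (resp. primitive $\mathbf a$-words) with exactly $n$ letters $U$ and $m$ letters $S$. Then for all $n,m\ge0$, $$a(3n,2m)=\mathfrak a(3n,2m)+\sum_{k\ge1}\sum_{s\ge2}\binom{3k-1}{s-2}\sum_{\substack{n_1+\cdots+n_s=n-k\\ m_1+\cdots+m_s=m\\ n_i,m_i\ge0}}\prod_{i=1}^{s}\mathfrak a(3n_i,2m_i).$$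
   Context: Words are finite sequences over $\{U,S\}$ read as products in $\Gamma$; $U^\alpha$ denotes $\alpha$ consecutive letters $U$. The binomial coefficient $\binom{3k-1}{s-2}$ is zero when $s-2>3k-1$. *)

theory Defs
  imports Main
begin

datatype letter = U | S

(* 2x2 integer matrices (a,b,c,d) = [[a,b],[c,d]] *)
type_synonym mat2 = "int \<times> int \<times> int \<times> int"

fun mmul :: "mat2 \<Rightarrow> mat2 \<Rightarrow> mat2" where
  "mmul (a,b,c,d) (e,f,g,h) = (a*e + b*g, a*f + b*h, c*e + d*g, c*f + d*h)"

(* Generators of PSL_2(Z) = <U,S | U^3, S^2>, as matrices in SL_2(Z):
   S = [[0,-1],[1,0]],  U = [[0,-1],[1,1]]  (U^3 = S^2 = -I) *)
fun letter_mat :: "letter \<Rightarrow> mat2" where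
  "letter_mat S = (0, -1, 1, 0)"
| "letter_mat U = (0, -1, 1, 1)"

definition word_mat :: "letter list \<Rightarrow> mat2" where
  "word_mat w = foldr (\<lambda>x M. mmul (letter_mat x) M) w (1, 0, 0, 1)"

(* a word equals the identity in PSL_2(Z) = SL_2(Z)/{\<plusminus>I} *)
definition is_identity :: "letter list \<Rightarrow> bool" where
  "is_identity w \<longleftrightarrow> word_mat w = (1,0,0,1) \<or> word_mat w = (-1,0,0,-1)"

definition no_SS :: "letter list \<Rightarrow> bool" where
  "no_SS w \<longleftrightarrow> (\<forall>i. Suc i < length w \<longrightarrow> \<not> (w ! i = S \<and> w ! Suc i = S))"

definition a_word :: "letter list \<Rightarrow> bool" where
  "a_word w \<longleftrightarrow> is_identity w \<and> no_SS w \<and>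
     (\<exists>B. B \<noteq> [] \<and> w = [S, U] @ B @ [U, S])"

fun join :: "letter list list \<Rightarrow> nat list \<Rightarrow> letter list" where
  "join [] _ = []"
| "join [A] _ = A"
| "join (A # As) [] = A @ join As []"
| "join (A # As) (\<alpha> # \<alpha>s) = A @ replicate \<alpha> U @ join As \<alpha>s"

definition primitive_a_word :: "letter list \<Rightarrow> bool" where
  "primitive_a_word w \<longleftrightarrow> a_word w \<and>
     \<not> (\<exists>As \<alpha>s. length As \<ge> 2 \<and> length \<alpha>s = length As - 1 \<and>
              (\<forall>\<alpha>\<in>set \<alpha>s. \<alpha> \<ge> 1) \<and> (\<forall>A\<in>set As. a_word A) \<and>
              w = join As \<alpha>s)"

definition a_count :: "nat \<Rightarrow> nat \<Rightarrow> nat" where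
  "a_count n m = card {w. a_word w \<and> count_list w U = n \<and> count_list w S = m}"

definition pa_count :: "nat \<Rightarrow> nat \<Rightarrow> nat" where
  "pa_count n m = card {w. primitive_a_word w \<and> count_list w U = n \<and> count_list w S = m}"

end

theory Submission
  imports Defs
begin

text \<open>
  An a-word is an S-framed word without SS, i.e. S U^a1 S ... U^ak S with all ai \<ge> 1, which
  is \<plusminus>I in SL2(Z). If no ai is divisible by 3, the word is \<plusminus>M S with M a nonnegative
  matrix, so it does not even lie in the subgroup generated by U (ping-pong). Otherwise a
  syllable S U^3j S = \<plusminus>I can be contracted, and by induction the word equals U^c up to sign
  only if k is odd and a1 + ... + ak \<equiv> c (mod 3). Hence an a-word has a multiple of 3 letters U
  and an even number of letters S.

  Cutting an a-word after every prefix that ends in S, is followed by U and lies in the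
  subgroup generated by U splits it uniquely as A1 U^\<alpha>1 A2 ... U^\<alpha>(s-1) As with primitive Ai,
  and such a product is an a-word iff 3 divides \<alpha>1 + ... + \<alpha>(s-1) = 3k. The gaps then form
  a composition of 3k into s - 1 parts, of which there are C(3k-1, s-2), while the Ai are
  counted by the primitive numbers.
\<close>

section \<open>Matrices and the subgroup generated by U\<close>

definition id_mat :: mat2 where "id_mat = (1, 0, 0, 1)"
definition S_mat :: mat2 where "S_mat = (0, -1, 1, 0)"

fun neg_mat :: "mat2 \<Rightarrow> mat2" where
  "neg_mat (a, b, c, d) = (-a, -b, -c, -d)"

lemma mmul_assoc: "mmul (mmul A B) C = mmul A (mmul B C)"
  by (cases A; cases B; cases C) (simp add: algebra_simps)

lemma mmul_id_left [simp]: "mmul id_mat A = A"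
  by (cases A) (simp add: id_mat_def)

lemma mmul_id_right [simp]: "mmul A id_mat = A"
  by (cases A) (simp add: id_mat_def)

lemma neg_mat_neg_mat [simp]: "neg_mat (neg_mat A) = A"
  by (cases A) simp

lemma mmul_neg_left [simp]: "mmul (neg_mat A) B = neg_mat (mmul A B)"
  by (cases A; cases B) simp

lemma mmul_neg_right [simp]: "mmul A (neg_mat B) = neg_mat (mmul A B)"
  by (cases A; cases B) simp

lemma word_mat_Nil [simp]: "word_mat [] = id_mat"
  by (simp add: word_mat_def id_mat_def)

lemma word_mat_Cons [simp]: "word_mat (x # xs) = mmul (letter_mat x) (word_mat xs)"
  by (simp add: word_mat_def)

lemma word_mat_append [simp]: "word_mat (xs @ ys) = mmul (word_mat xs) (word_mat ys)"
  by (induction xs) (simp_all add: mmul_assoc)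

lemma letter_mat_S [simp]: "letter_mat S = S_mat"
  by (simp add: S_mat_def)

declare letter_mat.simps(1) [simp del]

definition U_pow :: "nat \<Rightarrow> mat2" where
  "U_pow n = word_mat (replicate n U)"

lemma U_pow_0 [simp]: "U_pow 0 = id_mat"
  by (simp add: U_pow_def)

lemma U_pow_add: "U_pow (a + b) = mmul (U_pow a) (U_pow b)"
  by (simp add: U_pow_def replicate_add)

lemma U_pow_values:
  "U_pow 1 = (0, -1, 1, 1)" "U_pow 2 = (-1, -1, 1, 0)" "U_pow 3 = (-1, 0, 0, -1)"
  "U_pow 4 = (0, 1, -1, -1)" "U_pow 5 = (1, 1, -1, 0)" "U_pow 6 = (1, 0, 0, 1)"
  by (simp_all add: U_pow_def numeral_eq_Suc id_mat_def)

lemma U_pow_3: "U_pow 3 = neg_mat id_mat"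
  by (simp add: U_pow_values id_mat_def)

lemma U_pow_mod_6: "U_pow n = U_pow (n mod 6)"
proof -
  have "U_pow (6 * q + r) = U_pow r" for q r
    by (induction q) (simp_all add: U_pow_add U_pow_values(6) add.assoc flip: id_mat_def)
  then show ?thesis
    by (metis mod_mult_div_eq add.commute)
qed

lemma neg_U_pow: "neg_mat (U_pow a) = U_pow (a + 3)"
  by (simp add: U_pow_add U_pow_3)

lemma U_pow_mult_6 [simp]: "U_pow (6 * a) = id_mat"
  by (subst U_pow_mod_6) simp

definition proj_eq :: "mat2 \<Rightarrow> mat2 \<Rightarrow> bool" where
  "proj_eq A B \<longleftrightarrow> A = B \<or> A = neg_mat B"

lemma proj_eq_refl [simp]: "proj_eq A A"
  by (simp add: proj_eq_def)

lemma proj_eq_sym: "proj_eq A B \<Longrightarrow> proj_eq B A"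
  by (auto simp: proj_eq_def)

lemma proj_eq_trans [trans]: "proj_eq A B \<Longrightarrow> proj_eq B C \<Longrightarrow> proj_eq A C"
  by (auto simp: proj_eq_def)

lemma proj_eq_mmul: "proj_eq A B \<Longrightarrow> proj_eq C D \<Longrightarrow> proj_eq (mmul A C) (mmul B D)"
  by (auto simp: proj_eq_def)

lemma proj_eq_mmul_sandwich: "proj_eq B C \<Longrightarrow> proj_eq (mmul A (mmul B D)) (mmul A (mmul C D))"
  by (auto simp: proj_eq_def)

lemma is_identity_iff_proj_eq: "is_identity w \<longleftrightarrow> proj_eq (word_mat w) id_mat"
  by (auto simp: is_identity_def proj_eq_def id_mat_def)

lemma proj_eq_U_pow_mod_3: "proj_eq (U_pow a) (U_pow (a mod 3))"
proof -
  have multiple: "proj_eq (U_pow (3 * q)) id_mat" for q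
  proof (induction q)
    case (Suc q)
    have "U_pow (3 * Suc q) = neg_mat (U_pow (3 * q))"
      by (simp add: U_pow_add U_pow_3)
    then show ?case
      using Suc.IH by (auto simp: proj_eq_def)
  qed simp
  have "U_pow a = mmul (U_pow (3 * (a div 3))) (U_pow (a mod 3))"
    by (simp flip: U_pow_add)
  then show ?thesis
    using proj_eq_mmul[OF multiple proj_eq_refl] by simp
qed

lemma proj_eq_U_pow_iff: "proj_eq (U_pow a) (U_pow b) \<longleftrightarrow> a mod 3 = b mod 3"
proof -
  have small: "proj_eq (U_pow r) (U_pow t) \<longleftrightarrow> r = t" if "r < 3" "t < 3" for r t :: nat
  proof -
    have "r \<in> {0, 1, 2}" "t \<in> {0, 1, 2}"
      using that by auto
    then show ?thesis
      by (auto simp: proj_eq_def U_pow_values id_mat_def simp flip: One_nat_def)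
  qed
  have "proj_eq (U_pow a) (U_pow b) \<longleftrightarrow> proj_eq (U_pow (a mod 3)) (U_pow (b mod 3))"
    using proj_eq_U_pow_mod_3[of a] proj_eq_U_pow_mod_3[of b] proj_eq_sym proj_eq_trans by meson
  then show ?thesis
    using small by simp
qed

lemma proj_eq_U_pow_id_iff: "proj_eq (U_pow a) id_mat \<longleftrightarrow> a mod 3 = 0"
  using proj_eq_U_pow_iff[of a 0] by simp

(* <U> has order 6 in SL2(Z) and contains -I = U^3, so it is the preimage of <U> in PSL2(Z). *)
definition in_U_group :: "mat2 \<Rightarrow> bool" where
  "in_U_group M \<longleftrightarrow> (\<exists>c. M = U_pow c)"

lemma in_U_group_U_pow [simp]: "in_U_group (U_pow c)"
  by (auto simp: in_U_group_def)

lemma in_U_group_id [simp]: "in_U_group id_mat"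
  using in_U_group_U_pow[of 0] by simp

lemma in_U_group_if_proj_eq: "proj_eq A B \<Longrightarrow> in_U_group B \<Longrightarrow> in_U_group A"
  unfolding proj_eq_def in_U_group_def by (metis neg_U_pow)

lemma in_U_group_proj_eq_iff: "proj_eq A B \<Longrightarrow> in_U_group A \<longleftrightarrow> in_U_group B"
  using in_U_group_if_proj_eq proj_eq_sym by blast

lemma in_U_group_mmul_U_pow_left [simp]: "in_U_group (mmul (U_pow a) M) \<longleftrightarrow> in_U_group M"
proof
  assume "in_U_group (mmul (U_pow a) M)"
  then obtain c where c: "mmul (U_pow a) M = U_pow c"
    by (auto simp: in_U_group_def)
  have "M = mmul (U_pow (5 * a + a)) M"
    using U_pow_mult_6[of a] by simp
  also have "\<dots> = U_pow (5 * a + c)"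
    by (simp only: U_pow_add mmul_assoc c)
  finally show "in_U_group M"
    by (auto simp: in_U_group_def)
qed (auto simp: in_U_group_def simp flip: U_pow_add)

lemma in_U_group_mmul_U_pow_right [simp]: "in_U_group (mmul M (U_pow a)) \<longleftrightarrow> in_U_group M"
proof
  assume "in_U_group (mmul M (U_pow a))"
  then obtain c where c: "mmul M (U_pow a) = U_pow c"
    by (auto simp: in_U_group_def)
  have "M = mmul M (U_pow (a + 5 * a))"
    using U_pow_mult_6[of a] by simp
  also have "\<dots> = U_pow (c + 5 * a)"
    by (simp only: U_pow_add flip: mmul_assoc c)
  finally show "in_U_group M"
    by (auto simp: in_U_group_def)
qed (auto simp: in_U_group_def simp flip: U_pow_add)

fun nonneg_mat :: "mat2 \<Rightarrow> bool" where
  "nonneg_mat (a, b, c, d) \<longleftrightarrow> a \<ge> 0 \<and> b \<ge> 0 \<and> c \<ge> 0 \<and> d \<ge> 0"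

lemma nonneg_mat_mmul: "nonneg_mat A \<Longrightarrow> nonneg_mat B \<Longrightarrow> nonneg_mat (mmul A B)"
  by (cases A; cases B) simp

lemma U_pow_mod_6_cases:
  "U_pow a \<in> {(1, 0, 0, 1), (0, -1, 1, 1), (-1, -1, 1, 0), (-1, 0, 0, -1), (0, 1, -1, -1), (1, 1, -1, 0)}"
proof -
  have "a mod 6 = 0 \<or> a mod 6 = 1 \<or> a mod 6 = 2 \<or> a mod 6 = 3 \<or> a mod 6 = 4 \<or> a mod 6 = 5"
    by presburger
  then show ?thesis
    using U_pow_mod_6[of a] by (auto simp: U_pow_values id_mat_def simp flip: One_nat_def)
qed

lemma S_U_pow_proj_eq_nonneg:
  assumes "a mod 3 \<noteq> 0"
  obtains M where "nonneg_mat M" "proj_eq (mmul S_mat (U_pow a)) M"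
proof -
  have "a mod 6 = 1 \<or> a mod 6 = 2 \<or> a mod 6 = 4 \<or> a mod 6 = 5"
    using assms by presburger
  then have "proj_eq (mmul S_mat (U_pow a)) (1, 1, 0, 1) \<or> proj_eq (mmul S_mat (U_pow a)) (1, 0, 1, 1)"
    using U_pow_mod_6[of a] by (auto simp: U_pow_values S_mat_def proj_eq_def simp flip: One_nat_def)
  then show ?thesis
    using that[of "(1, 1, 0, 1)"] that[of "(1, 0, 1, 1)"] by auto
qed

lemma not_in_U_group_nonneg_mmul_S: "nonneg_mat M \<Longrightarrow> \<not> in_U_group (mmul M S_mat)"
proof
  assume "nonneg_mat M" "in_U_group (mmul M S_mat)"
  then obtain k where k: "mmul M S_mat = U_pow k"
    by (auto simp: in_U_group_def)
  obtain a b c d where M: "M = (a, b, c, d)"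
    by (cases M)
  have "(b, -a, d, -c) \<in> {(1, 0, 0, 1), (0, -1, 1, 1), (-1, -1, 1, 0), (-1, 0, 0, -1),
      (0, 1, -1, -1), (1, 1, -1, 0)}"
    using k U_pow_mod_6_cases[of k] by (simp add: M S_mat_def)
  then show False
    using \<open>nonneg_mat M\<close> by (auto simp: M)
qed

section \<open>Words S U^a1 S ... U^ak S\<close>

(* su_word [a1, ..., ak] = S U^a1 S ... U^ak S; a zero exponent produces a factor SS. *)
definition syllables :: "nat list \<Rightarrow> letter list" where
  "syllables as = concat (map (\<lambda>a. replicate a U @ [S]) as)"

definition su_word :: "nat list \<Rightarrow> letter list" where
  "su_word as = S # syllables as"

lemma syllables_Nil [simp]: "syllables [] = []"
  by (simp add: syllables_def)

lemma syllables_Cons: "syllables (a # as) = replicate a U @ S # syllables as"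
  by (simp add: syllables_def)

lemma syllables_append: "syllables (as @ bs) = syllables as @ syllables bs"
  by (simp add: syllables_def)

lemma su_word_Nil [simp]: "su_word [] = [S]"
  by (simp add: su_word_def)

lemma su_word_Cons: "su_word (a # as) = S # replicate a U @ su_word as"
  by (simp add: su_word_def syllables_Cons)

lemma su_word_append: "su_word (as @ bs) = su_word as @ syllables bs"
  by (simp add: su_word_def syllables_append)

lemma word_mat_su_word_Cons:
  "word_mat (su_word (a # as)) = mmul S_mat (mmul (U_pow a) (word_mat (su_word as)))"
  by (simp add: su_word_Cons U_pow_def)

lemma word_mat_syllables_Cons:
  "word_mat (syllables (a # as)) = mmul (U_pow a) (mmul S_mat (word_mat (syllables as)))"
  by (simp add: syllables_Cons U_pow_def)

lemma word_mat_su_word_append: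
  "word_mat (su_word (as @ bs)) = mmul (word_mat (su_word as)) (word_mat (syllables bs))"
  by (simp add: su_word_append)

lemma su_word_proj_eq_nonneg_mmul_S:
  "\<forall>a\<in>set as. a mod 3 \<noteq> 0 \<Longrightarrow> \<exists>M. nonneg_mat M \<and> proj_eq (word_mat (su_word as)) (mmul M S_mat)"
proof (induction as)
  case Nil
  have "nonneg_mat id_mat"
    by (simp add: id_mat_def)
  moreover have "word_mat (su_word []) = mmul id_mat S_mat"
    by simp
  ultimately show ?case
    by (metis proj_eq_refl)
next
  case (Cons a as)
  obtain M where M: "nonneg_mat M" "proj_eq (word_mat (su_word as)) (mmul M S_mat)"
    using Cons by auto
  have "a mod 3 \<noteq> 0"
    using Cons.prems by simp
  then obtain N where N: "nonneg_mat N" "proj_eq (mmul S_mat (U_pow a)) N"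
    using S_U_pow_proj_eq_nonneg by blast
  have "proj_eq (mmul (mmul S_mat (U_pow a)) (word_mat (su_word as))) (mmul N (mmul M S_mat))"
    by (rule proj_eq_mmul[OF N(2) M(2)])
  then show ?case
    using nonneg_mat_mmul[OF N(1) M(1)] by (metis word_mat_su_word_Cons mmul_assoc)
qed

lemma su_word_not_in_U_group:
  "\<forall>a\<in>set as. a mod 3 \<noteq> 0 \<Longrightarrow> \<not> in_U_group (word_mat (su_word as))"
  by (metis su_word_proj_eq_nonneg_mmul_S not_in_U_group_nonneg_mmul_S in_U_group_proj_eq_iff)

section \<open>Contracting a syllable S U^3j S\<close>

lemma S_mat_squared: "mmul S_mat S_mat = neg_mat id_mat"
  by (simp add: S_mat_def id_mat_def)

lemma S_U_pow_S_proj_eq: "a mod 3 = 0 \<Longrightarrow> proj_eq (mmul S_mat (mmul (U_pow a) (mmul S_mat Z))) Z"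
proof -
  assume "a mod 3 = 0"
  then have "proj_eq (mmul S_mat (mmul (U_pow a) (mmul S_mat Z))) (mmul S_mat (mmul id_mat (mmul S_mat Z)))"
    by (intro proj_eq_mmul proj_eq_refl) (simp add: proj_eq_U_pow_id_iff)
  also have "mmul S_mat (mmul id_mat (mmul S_mat Z)) = neg_mat Z"
    by (simp flip: mmul_assoc add: S_mat_squared)
  finally show ?thesis
    by (auto simp: proj_eq_def)
qed

lemma su_word_single_proj_eq: "a mod 3 = 0 \<Longrightarrow> proj_eq (word_mat (su_word [a])) id_mat"
  using S_U_pow_S_proj_eq[of a id_mat] by (simp add: word_mat_su_word_Cons)

lemma su_word_contract_first:
  "a mod 3 = 0 \<Longrightarrow> proj_eq (word_mat (su_word (a # y # post))) (mmul (U_pow y) (word_mat (su_word post)))"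
  unfolding word_mat_su_word_Cons by (rule S_U_pow_S_proj_eq)

lemma su_word_contract_last:
  "a mod 3 = 0 \<Longrightarrow> proj_eq (word_mat (su_word (pre @ [x, a]))) (mmul (word_mat (su_word pre)) (U_pow x))"
  using proj_eq_mmul_sandwich[OF S_U_pow_S_proj_eq[of a id_mat], of "mmul (word_mat (su_word pre)) (U_pow x)" id_mat]
  by (simp add: word_mat_su_word_append word_mat_syllables_Cons mmul_assoc)

lemma su_word_contract_middle:
  "a mod 3 = 0 \<Longrightarrow>
    proj_eq (word_mat (su_word (pre @ x # a # y # post))) (word_mat (su_word (pre @ (x + y) # post)))"
  unfolding word_mat_su_word_append word_mat_syllables_Cons U_pow_add mmul_assoc
  by (intro proj_eq_mmul proj_eq_refl S_U_pow_S_proj_eq)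

(* The outer powers U^x and U^z absorb the neighbouring exponents when the contracted
   syllable is the first or the last one. *)
lemma U_pow_su_word_U_pow_contract:
  assumes "a mod 3 = 0" "as = pre @ a # post" "pre \<noteq> [] \<or> post \<noteq> []"
  obtains as' x' z' where "length as = length as' + 2"
    "x' + sum_list as' + z' + a = x + sum_list as + z"
    "proj_eq (mmul (U_pow x) (mmul (word_mat (su_word as)) (U_pow z)))
       (mmul (U_pow x') (mmul (word_mat (su_word as')) (U_pow z')))"
proof (cases post)
  case Nil
  then obtain pre' x1 where pre: "pre = pre' @ [x1]"
    using assms(3) by (metis rev_exhaust)
  have "proj_eq (mmul (U_pow x) (mmul (word_mat (su_word as)) (U_pow z)))
      (mmul (U_pow x) (mmul (word_mat (su_word pre')) (U_pow (x1 + z))))"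
    using proj_eq_mmul_sandwich[OF su_word_contract_last[OF assms(1), of pre' x1], of "U_pow x" "U_pow z"]
    by (simp add: assms(2) pre Nil U_pow_add mmul_assoc)
  then show ?thesis
    using that[of pre' x "x1 + z"] by (simp add: assms(2) pre Nil)
next
  case post: (Cons y post')
  show ?thesis
  proof (cases pre)
    case Nil
    have "proj_eq (mmul (U_pow x) (mmul (word_mat (su_word as)) (U_pow z)))
        (mmul (U_pow (x + y)) (mmul (word_mat (su_word post')) (U_pow z)))"
      using proj_eq_mmul_sandwich[OF su_word_contract_first[OF assms(1), of y post'], of "U_pow x" "U_pow z"]
      by (simp add: assms(2) Nil post U_pow_add mmul_assoc)
    then show ?thesis
      using that[of post' "x + y" z] by (simp add: assms(2) Nil post)
  next
    case (Cons x0 pre'')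
    obtain pre' x1 where pre: "pre = pre' @ [x1]"
      using Cons by (metis rev_exhaust list.distinct(1))
    have "proj_eq (mmul (U_pow x) (mmul (word_mat (su_word as)) (U_pow z)))
        (mmul (U_pow x) (mmul (word_mat (su_word (pre' @ (x1 + y) # post'))) (U_pow z)))"
      using proj_eq_mmul_sandwich[OF su_word_contract_middle[OF assms(1), of pre' x1 y post']]
      by (simp add: assms(2) pre post)
    then show ?thesis
      using that[of "pre' @ (x1 + y) # post'" x z] by (simp add: assms(2) pre post)
  qed
qed

lemma U_pow_su_word_U_pow_proj_eq_U_pow:
  assumes "proj_eq (mmul (U_pow x) (mmul (word_mat (su_word as)) (U_pow z))) (U_pow c)"
  shows "odd (length as) \<and> (x + sum_list as + z) mod 3 = c mod 3"
  using assms
proof (induction "length as" arbitrary: x as z rule: less_induct)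
  case less
  show ?case
  proof (cases "\<forall>a\<in>set as. a mod 3 \<noteq> 0")
    case True
    have "in_U_group (mmul (U_pow x) (mmul (word_mat (su_word as)) (U_pow z)))"
      using in_U_group_if_proj_eq[OF less.prems] by simp
    then show ?thesis
      using su_word_not_in_U_group[OF True] by simp
  next
    case False
    then obtain pre a post where as: "as = pre @ a # post" and a: "a mod 3 = 0"
      by (metis split_list)
    have add_a: "(n + a) mod 3 = n mod 3" for n
      using a by (simp flip: mod_add_right_eq)
    show ?thesis
    proof (cases "pre = [] \<and> post = []")
      case True
      have "proj_eq (mmul (U_pow x) (mmul (word_mat (su_word as)) (U_pow z))) (U_pow (x + z))"
        using proj_eq_mmul_sandwich[OF su_word_single_proj_eq[OF a], of "U_pow x" "U_pow z"]
        by (simp add: as True U_pow_add)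
      then have "proj_eq (U_pow (x + z)) (U_pow c)"
        using less.prems proj_eq_sym proj_eq_trans by blast
      then have "(x + z) mod 3 = c mod 3"
        by (simp add: proj_eq_U_pow_iff)
      then have "(x + z + a) mod 3 = c mod 3"
        by (simp only: add_a)
      then show ?thesis
        by (simp add: as True add_ac)
    next
      case False
      obtain as' x' z' where as': "length as = length as' + 2" "x' + sum_list as' + z' + a = x + sum_list as + z"
        "proj_eq (mmul (U_pow x) (mmul (word_mat (su_word as)) (U_pow z)))
           (mmul (U_pow x') (mmul (word_mat (su_word as')) (U_pow z')))"
        using U_pow_su_word_U_pow_contract[OF a as] False by blast
      have "proj_eq (mmul (U_pow x') (mmul (word_mat (su_word as')) (U_pow z'))) (U_pow c)"
        using as'(3) less.prems proj_eq_sym proj_eq_trans by blast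
      then have "odd (length as') \<and> (x' + sum_list as' + z') mod 3 = c mod 3"
        using less.hyps as'(1) by simp
      then show ?thesis
        using as'(1) add_a by (simp flip: as'(2))
    qed
  qed
qed

definition U_prefix_free :: "nat list \<Rightarrow> bool" where
  "U_prefix_free as \<longleftrightarrow> (\<forall>i<length as. \<not> in_U_group (word_mat (su_word (take i as))))"

lemma U_prefix_free_contract_middle:
  assumes "a mod 3 = 0" "U_prefix_free (pre @ x # a # y # post)"
  shows "U_prefix_free (pre @ (x + y) # post)"
  unfolding U_prefix_free_def
proof (intro allI impI)
  fix j
  assume j: "j < length (pre @ (x + y) # post)"
  show "\<not> in_U_group (word_mat (su_word (take j (pre @ (x + y) # post))))"
  proof (cases "j \<le> length pre")
    case True
    then have "take j (pre @ (x + y) # post) = take j (pre @ x # a # y # post)"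
      by simp
    moreover have "j < length (pre @ x # a # y # post)"
      using j by simp
    ultimately show ?thesis
      using assms(2) unfolding U_prefix_free_def by metis
  next
    case False
    define t where "t = j - length pre - 1"
    have "take j (pre @ (x + y) # post) = pre @ (x + y) # take t post"
      "take (j + 2) (pre @ x # a # y # post) = pre @ x # a # y # take t post"
      using False by (simp_all add: t_def take_Cons' numeral_eq_Suc)
    moreover have "\<not> in_U_group (word_mat (su_word (take (j + 2) (pre @ x # a # y # post))))"
      using assms(2) j by (simp add: U_prefix_free_def)
    ultimately show ?thesis
      using su_word_contract_middle[OF assms(1)] in_U_group_proj_eq_iff by metis
  qed
qed

lemma U_prefix_free_zero_not_first: "a mod 3 = 0 \<Longrightarrow> \<not> U_prefix_free (a # y # post)"
  using su_word_single_proj_eq in_U_group_if_proj_eq unfolding U_prefix_free_def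
  by (metis in_U_group_id length_Cons less_Suc_eq_0_disj take_0 take_Suc_Cons zero_less_Suc)

lemma U_prefix_free_zero_not_last:
  assumes "a mod 3 = 0" "in_U_group (word_mat (su_word (pre @ [x, a])))"
  shows "\<not> U_prefix_free (pre @ [x, a])"
proof -
  have "in_U_group (mmul (word_mat (su_word pre)) (U_pow x))"
    using su_word_contract_last[OF assms(1)] assms(2) in_U_group_proj_eq_iff by blast
  then show ?thesis
    unfolding U_prefix_free_def by (auto intro!: exI[of _ "length pre"])
qed

lemma su_word_proj_eq_id_if_U_prefix_free:
  "in_U_group (word_mat (su_word as)) \<Longrightarrow> U_prefix_free as \<Longrightarrow> proj_eq (word_mat (su_word as)) id_mat"
proof (induction "length as" arbitrary: as rule: less_induct)
  case less
  show ?case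
  proof (cases "\<forall>a\<in>set as. a mod 3 \<noteq> 0")
    case True
    then show ?thesis
      using less.prems su_word_not_in_U_group by blast
  next
    case False
    then obtain pre a post where as: "as = pre @ a # post" and a: "a mod 3 = 0"
      by (metis split_list)
    consider "pre = []" "post = []" | y post' where "pre = []" "post = y # post'"
      | pre' x where "pre = pre' @ [x]" "post = []"
      | pre' x y post' where "pre = pre' @ [x]" "post = y # post'"
      by (metis list.exhaust rev_exhaust)
    then show ?thesis
    proof cases
      case 1
      then show ?thesis
        using su_word_single_proj_eq[OF a] by (simp add: as)
    next
      case 2
      then show ?thesis
        using U_prefix_free_zero_not_first[OF a] less.prems(2) by (simp add: as)
    next
      case 3
      then show ?thesis
        using U_prefix_free_zero_not_last[OF a] less.prems by (simp add: as)
    next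
      case (4 pre' x y post')
      define as' where "as' = pre' @ (x + y) # post'"
      have as_eq: "as = pre' @ x # a # y # post'"
        by (simp add: as 4)
      have contract: "proj_eq (word_mat (su_word as)) (word_mat (su_word as'))"
        unfolding as_eq as'_def by (rule su_word_contract_middle[OF a])
      have "U_prefix_free as'"
        using U_prefix_free_contract_middle[OF a] less.prems(2) by (simp add: as_eq as'_def)
      moreover have "in_U_group (word_mat (su_word as'))"
        using less.prems(1) contract in_U_group_proj_eq_iff by blast
      moreover have "length as' < length as"
        by (simp add: as_eq as'_def)
      ultimately show ?thesis
        using less.hyps contract proj_eq_trans by blast
    qed
  qed
qed

section \<open>a-words\<close>

lemma no_SS_Nil [simp]: "no_SS []"
  by (simp add: no_SS_def)

lemma no_SS_Cons_Cons: "no_SS (x # y # r) \<longleftrightarrow> \<not> (x = S \<and> y = S) \<and> no_SS (y # r)"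
  unfolding no_SS_def by (auto simp: All_less_Suc2)

lemma no_SS_Cons: "no_SS (x # xs) \<longleftrightarrow> (xs \<noteq> [] \<longrightarrow> \<not> (x = S \<and> hd xs = S)) \<and> no_SS xs"
  by (cases xs) (simp_all add: no_SS_Cons_Cons, simp add: no_SS_def)

lemma no_SS_append:
  "no_SS (xs @ ys) \<longleftrightarrow> no_SS xs \<and> no_SS ys \<and> \<not> (xs \<noteq> [] \<and> ys \<noteq> [] \<and> last xs = S \<and> hd ys = S)"
  by (induction xs) (auto simp: no_SS_Cons)

lemma no_SS_replicate_U_append [simp]: "no_SS (replicate n U @ w) \<longleftrightarrow> no_SS w"
  by (induction n) (simp_all add: no_SS_Cons)

definition s_framed :: "letter list \<Rightarrow> bool" where
  "s_framed w \<longleftrightarrow> w \<noteq> [] \<and> hd w = S \<and> last w = S \<and> no_SS w"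

lemma eq_syllables_if_last_S: "xs = [] \<or> last xs = S \<Longrightarrow> \<exists>as. xs = syllables as"
proof (induction xs)
  case Nil
  then show ?case
    by (metis syllables_Nil)
next
  case (Cons x xs)
  show ?case
  proof (cases x)
    case U
    then have "xs \<noteq> []" "last xs = S"
      using Cons.prems by (auto split: if_splits)
    then obtain a as where "xs = syllables (a # as)"
      using Cons.IH by (metis neq_Nil_conv syllables_Nil)
    then have "x # xs = syllables (Suc a # as)"
      by (simp add: U syllables_Cons)
    then show ?thesis ..
  next
    case S
    obtain as where "xs = syllables as"
      using Cons by (cases xs) auto
    then have "x # xs = syllables (0 # as)"
      by (simp add: S syllables_Cons)
    then show ?thesis ..
  qed
qed

lemma no_SS_su_word_iff: "no_SS (su_word as) \<longleftrightarrow> (\<forall>a\<in>set as. a \<ge> 1)"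
proof (induction as)
  case (Cons a as)
  then show ?case
    by (cases a) (auto simp: su_word_def syllables_Cons no_SS_Cons_Cons no_SS_Cons)
qed (simp add: no_SS_def)

lemma last_syllables: "syllables as \<noteq> [] \<Longrightarrow> last (syllables as) = S"
  by (induction as) (auto simp: syllables_Cons)

lemma last_su_word [simp]: "last (su_word as) = S"
  using last_syllables[of as] by (auto simp: su_word_def)

lemma su_word_neq_Nil [simp]: "su_word as \<noteq> []"
  by (simp add: su_word_def)

lemma hd_su_word [simp]: "hd (su_word as) = S"
  by (simp add: su_word_def)

lemma s_framed_iff_su_word: "s_framed w \<longleftrightarrow> (\<exists>as. (\<forall>a\<in>set as. a \<ge> 1) \<and> w = su_word as)"
proof
  assume w: "s_framed w"
  then obtain r where r: "w = S # r"
    unfolding s_framed_def by (cases w) auto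
  then obtain as where "w = su_word as"
    using w eq_syllables_if_last_S[of r] by (cases r) (auto simp: s_framed_def su_word_def)
  then show "\<exists>as. (\<forall>a\<in>set as. a \<ge> 1) \<and> w = su_word as"
    using w no_SS_su_word_iff unfolding s_framed_def by blast
qed (auto simp: s_framed_def no_SS_su_word_iff)

lemma count_list_replicate: "count_list (replicate n x) y = (if x = y then n else 0)"
  by (induction n) auto

lemma count_list_su_word:
  "count_list (su_word as) U = sum_list as" "count_list (su_word as) S = length as + 1"
  by (induction as) (simp_all add: su_word_Cons count_list_replicate)

lemma length_eq_count_U_plus_count_S: "length w = count_list w U + count_list w S"
proof (induction w)
  case (Cons x w)
  then show ?case
    by (cases x) auto
qed simp

lemma proj_eq_U_pow_counts:
  assumes "s_framed w" "proj_eq (word_mat w) (U_pow c)"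
  shows "even (count_list w S) \<and> count_list w U mod 3 = c mod 3"
proof -
  obtain as where "w = su_word as"
    using assms(1) s_framed_iff_su_word by blast
  then show ?thesis
    using U_pow_su_word_U_pow_proj_eq_U_pow[of 0 as 0 c] assms(2) by (simp add: count_list_su_word)
qed

lemma Cons_Cons_eq_append_pair:
  assumes "w = x1 # x2 # r" "w = v @ [y1, y2]" "length w \<ge> 5"
  shows "\<exists>B. B \<noteq> [] \<and> w = [x1, x2] @ B @ [y1, y2]"
proof -
  obtain a b B where "v = a # b # B" "B \<noteq> []"
    using assms(2,3) by (cases v rule: remdups_adj.cases) (auto simp: Suc_le_length_iff)
  then show ?thesis
    using assms(1,2) by auto
qed

lemma a_word_iff: "a_word w \<longleftrightarrow> s_framed w \<and> is_identity w"
proof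
  assume framed_id: "s_framed w \<and> is_identity w"
  then obtain as where as: "\<forall>a\<in>set as. a \<ge> 1" "w = su_word as"
    using s_framed_iff_su_word by blast
  have "even (count_list w S) \<and> count_list w U mod 3 = 0"
    using proj_eq_U_pow_counts[of w 0] framed_id by (simp add: is_identity_iff_proj_eq)
  then have odd: "odd (length as)" and sum: "sum_list as mod 3 = 0"
    by (simp_all add: as(2) count_list_su_word)
  obtain a rest where a: "as = a # rest"
    using odd by (cases as) auto
  obtain as' z where z: "as = as' @ [z]"
    using odd by (cases as rule: rev_cases) auto
  have "a \<in> set as"
    using a by simp
  moreover have "z \<in> set as"
    using z by simp
  ultimately have "a \<ge> 1" "z \<ge> 1"
    using as(1) by blast+
  then obtain a' z' where "a = Suc a'" "z = Suc z'"
    by (metis Suc_le_D One_nat_def)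
  then have w1: "w = S # U # (replicate a' U @ su_word rest)"
    and w2: "w = (su_word as' @ replicate z' U) @ [U, S]"
    using as(2) by (simp_all add: a su_word_Cons, simp add: z su_word_append syllables_def
        flip: replicate_append_same)
  have "sum_list as \<noteq> 0"
    using as(1) a by simp
  then have "sum_list as \<ge> 3"
    using sum by presburger
  then have "length w \<ge> 5"
    using odd by (simp add: as(2) length_eq_count_U_plus_count_S count_list_su_word a)
  then show "a_word w"
    using Cons_Cons_eq_append_pair[OF w1 w2] framed_id unfolding a_word_def s_framed_def by blast
qed (auto simp: a_word_def s_framed_def)

lemma a_word_counts: "a_word w \<Longrightarrow> 3 dvd count_list w U \<and> even (count_list w S)"
  using proj_eq_U_pow_counts[of w 0] by (auto simp: a_word_iff is_identity_iff_proj_eq)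

section \<open>Decomposition into primitive a-words\<close>

lemma join_Cons: "As \<noteq> [] \<Longrightarrow> join (A # As) (g # gs) = A @ replicate g U @ join As gs"
  by (cases As) auto

lemma join_append:
  assumes "Rs \<noteq> []" "Rs' \<noteq> []" "length gs = length Rs - 1"
  shows "join (Rs @ Rs') (gs @ g # gs') = join Rs gs @ replicate g U @ join Rs' gs'"
  using assms
proof (induction Rs arbitrary: gs)
  case (Cons R Rs)
  show ?case
  proof (cases "Rs = []")
    case False
    then obtain h hs where "gs = h # hs"
      using Cons.prems by (cases gs) auto
    then show ?thesis
      using Cons False by (simp add: join_Cons)
  qed (use Cons in \<open>simp add: join_Cons\<close>)
qed simp

lemma count_list_join:
  "length gs = length As - 1 \<Longrightarrow>
    count_list (join As gs) x = sum_list (map (\<lambda>A. count_list A x) As) + (if x = U then sum_list gs else 0)"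
proof (induction As arbitrary: gs)
  case (Cons A As)
  show ?case
  proof (cases "As = []")
    case False
    then obtain g gs' where "gs = g # gs'"
      using Cons.prems by (cases gs) auto
    then show ?thesis
      using Cons False by (simp add: join_Cons count_list_replicate)
  qed (use Cons in simp)
qed simp

lemma word_mat_join_proj_eq:
  assumes "\<forall>A\<in>set As. proj_eq (word_mat A) id_mat" "length gs = length As - 1" "As \<noteq> []"
  shows "proj_eq (word_mat (join As gs)) (U_pow (sum_list gs))"
  using assms
proof (induction As arbitrary: gs)
  case (Cons A As)
  show ?case
  proof (cases "As = []")
    case False
    then obtain g gs' where gs: "gs = g # gs'"
      using Cons.prems by (cases gs) auto
    have IH: "proj_eq (word_mat (join As gs')) (U_pow (sum_list gs'))"
      using Cons False by (simp add: gs)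
    have "word_mat (join (A # As) gs) = mmul (word_mat A) (mmul (U_pow g) (word_mat (join As gs')))"
      by (simp add: gs join_Cons[OF False] U_pow_def)
    moreover have "proj_eq (mmul (word_mat A) (mmul (U_pow g) (word_mat (join As gs'))))
        (mmul id_mat (mmul (U_pow g) (U_pow (sum_list gs'))))"
      using Cons.prems(1) IH by (intro proj_eq_mmul proj_eq_refl) auto
    ultimately show ?thesis
      by (simp add: gs U_pow_add)
  qed (use Cons in simp)
qed simp

lemma su_word_append_replicate_U: "su_word as @ replicate g U @ su_word bs = su_word (as @ g # bs)"
  by (simp add: su_word_def syllables_append syllables_Cons)

lemma s_framed_join:
  assumes "\<forall>A\<in>set As. s_framed A" "\<forall>g\<in>set gs. g \<ge> 1" "length gs = length As - 1" "As \<noteq> []"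
  shows "s_framed (join As gs)"
  using assms
proof (induction As arbitrary: gs)
  case (Cons A As)
  show ?case
  proof (cases "As = []")
    case False
    then obtain g gs' where gs: "gs = g # gs'"
      using Cons.prems by (cases gs) auto
    have "s_framed A" "s_framed (join As gs')"
      using Cons False by (simp_all add: gs)
    then obtain as bs where "A = su_word as" "join As gs' = su_word bs"
      "\<forall>a\<in>set as. a \<ge> 1" "\<forall>b\<in>set bs. b \<ge> 1"
      unfolding s_framed_iff_su_word by blast
    moreover have "g \<ge> 1"
      using Cons.prems(2) by (simp add: gs)
    ultimately show ?thesis
      unfolding s_framed_iff_su_word gs join_Cons[OF False] su_word_append_replicate_U
      by (intro exI[of _ "as @ g # bs"]) (auto simp: su_word_append_replicate_U)
  qed (use Cons in simp)
qed simp

definition cut_free :: "letter list \<Rightarrow> bool" where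
  "cut_free w \<longleftrightarrow> (\<forall>p q. w = p @ U # q \<longrightarrow> p \<noteq> [] \<longrightarrow> last p = S \<longrightarrow> \<not> in_U_group (word_mat p))"

lemma s_framed_split_at_U_run:
  assumes "s_framed x" "x = p @ U # q" "p \<noteq> []" "last p = S"
  obtains n d where "n \<ge> 1" "x = p @ replicate n U @ d" "s_framed p" "s_framed d"
proof -
  define n where "n = length (takeWhile (\<lambda>y. y = U) (U # q))"
  define d where "d = dropWhile (\<lambda>y. y = U) (U # q)"
  have "takeWhile (\<lambda>y. y = U) (U # q) = replicate n U"
    unfolding n_def by (metis (mono_tags) replicate_length_same set_takeWhileD)
  then have x: "x = p @ replicate n U @ d"
    unfolding d_def using assms(2) by (metis takeWhile_dropWhile_id)
  have n: "n \<ge> 1"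
    by (simp add: n_def)
  have "d \<noteq> []"
  proof
    assume "d = []"
    then have "last x = U"
      using x n by (cases n) auto
    then show False
      using assms(1) by (simp add: s_framed_def)
  qed
  moreover have "hd d = S"
    using \<open>d \<noteq> []\<close> unfolding d_def by (metis (full_types) hd_dropWhile letter.exhaust)
  ultimately have "s_framed d" "s_framed p"
    using assms(1,3,4) x unfolding s_framed_def by (auto simp: no_SS_append)
  then show ?thesis
    using that n x by blast
qed

lemma in_U_group_suffix:
  assumes "in_U_group (word_mat (p @ replicate n U @ d))" "in_U_group (word_mat p)"
  shows "in_U_group (word_mat d)"
proof -
  obtain c where "word_mat p = U_pow c"
    using assms(2) by (auto simp: in_U_group_def)
  then show ?thesis
    using assms(1) by (simp flip: U_pow_def)
qed

lemma su_word_eq_take_append_U: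
  assumes "\<forall>a\<in>set as. a \<ge> 1" "i < length as"
  obtains q where "su_word as = su_word (take i as) @ U # q"
proof -
  obtain b rest where drop: "drop i as = b # rest"
    using assms(2) by (metis Cons_nth_drop_Suc)
  then have "b \<ge> 1"
    using assms(1) by (metis in_set_dropD list.set_intros(1))
  then obtain b' where "b = Suc b'"
    by (metis Suc_le_D One_nat_def)
  moreover have "su_word as = su_word (take i as) @ syllables (drop i as)"
    by (metis append_take_drop_id su_word_append)
  ultimately show ?thesis
    using that by (simp add: drop syllables_Cons)
qed

lemma proj_eq_id_if_cut_free:
  assumes "s_framed x" "in_U_group (word_mat x)" "cut_free x"
  shows "proj_eq (word_mat x) id_mat"
proof -
  obtain as where as: "\<forall>a\<in>set as. a \<ge> 1" "x = su_word as"
    using assms(1) s_framed_iff_su_word by blast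
  have "\<not> in_U_group (word_mat (su_word (take i as)))" if "i < length as" for i
    using su_word_eq_take_append_U[OF as(1) that] assms(3) as(2) unfolding cut_free_def by force
  then show ?thesis
    using su_word_proj_eq_id_if_U_prefix_free assms(2) as(2) unfolding U_prefix_free_def by blast
qed

lemma a_word_in_U_group: "a_word A \<Longrightarrow> in_U_group (word_mat A)"
  unfolding a_word_iff is_identity_iff_proj_eq using in_U_group_if_proj_eq in_U_group_id by blast

lemma primitive_if_cut_free:
  assumes "a_word w" "cut_free w"
  shows "primitive_a_word w"
  unfolding primitive_a_word_def
proof (intro conjI assms(1) notI)
  assume "\<exists>As \<alpha>s. length As \<ge> 2 \<and> length \<alpha>s = length As - 1 \<and>
    (\<forall>\<alpha>\<in>set \<alpha>s. \<alpha> \<ge> 1) \<and> (\<forall>A\<in>set As. a_word A) \<and> w = join As \<alpha>s"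
  then obtain As gs where h: "length As \<ge> 2" "length gs = length As - 1" "\<forall>g\<in>set gs. g \<ge> 1"
    "\<forall>A\<in>set As. a_word A" "w = join As gs"
    by blast
  then obtain A As' g gs' where "As = A # As'" "As' \<noteq> []" "gs = g # gs'"
    by (cases As; cases gs) fastforce+
  moreover obtain g' where "g = Suc g'"
    using h(3) calculation by (cases g) auto
  ultimately have w: "w = A @ U # (replicate g' U @ join As' gs')" and A: "a_word A"
    using h(4,5) by (simp_all add: join_Cons)
  moreover have "A \<noteq> []" "last A = S"
    using A by (auto simp: a_word_def)
  ultimately show False
    using assms(2) a_word_in_U_group[OF A] unfolding cut_free_def by blast
qed

definition decomposition :: "letter list list \<Rightarrow> nat list \<Rightarrow> bool" where
  "decomposition As gs \<longleftrightarrow> As \<noteq> [] \<and> length gs = length As - 1 \<and> (\<forall>g\<in>set gs. g \<ge> 1) \<and>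
     (\<forall>A\<in>set As. primitive_a_word A)"

lemma decomposition_append:
  "decomposition Rs gs \<Longrightarrow> decomposition Rs' gs' \<Longrightarrow> g \<ge> 1 \<Longrightarrow>
    decomposition (Rs @ Rs') (gs @ g # gs')"
  unfolding decomposition_def by (cases Rs) auto

lemma join_append_decomposition:
  "decomposition Rs gs \<Longrightarrow> decomposition Rs' gs' \<Longrightarrow>
    join (Rs @ Rs') (gs @ g # gs') = join Rs gs @ replicate g U @ join Rs' gs'"
  unfolding decomposition_def by (simp add: join_append)

(* The hypothesis decompose is the induction hypothesis of decomposition_exists; once that
   lemma is proved, it is discharged by decomposition_exists itself. *)
lemma decomposition_split_at_cut:
  assumes "s_framed x" "x = p @ U # q" "p \<noteq> []" "last p = S" "in_U_group (word_mat p)"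
    and "in_U_group (word_mat x)"
    and decompose: "\<And>y. length y < length x \<Longrightarrow> s_framed y \<Longrightarrow> in_U_group (word_mat y) \<Longrightarrow>
      \<exists>As gs. decomposition As gs \<and> y = join As gs"
  obtains Rs gs Rs' gs' g where "decomposition Rs gs" "decomposition Rs' gs'" "g \<ge> 1"
    "x = join (Rs @ Rs') (gs @ g # gs')"
proof -
  obtain n d where nd: "n \<ge> 1" "x = p @ replicate n U @ d" "s_framed p" "s_framed d"
    using s_framed_split_at_U_run[OF assms(1-4)] by blast
  obtain Rs gs where "decomposition Rs gs" "p = join Rs gs"
    using decompose[of p] nd assms(5) by auto
  moreover obtain Rs' gs' where "decomposition Rs' gs'" "d = join Rs' gs'"
    using decompose[of d] nd in_U_group_suffix assms(5,6) by (auto simp: s_framed_def)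
  ultimately show ?thesis
    using that nd(1,2) by (metis join_append_decomposition)
qed

lemma decomposition_exists:
  "s_framed x \<Longrightarrow> in_U_group (word_mat x) \<Longrightarrow> \<exists>As gs. decomposition As gs \<and> x = join As gs"
proof (induction "length x" arbitrary: x rule: less_induct)
  case less
  show ?case
  proof (cases "cut_free x")
    case True
    then have "primitive_a_word x"
      using proj_eq_id_if_cut_free[OF less.prems] less.prems(1)
      by (simp add: primitive_if_cut_free a_word_iff is_identity_iff_proj_eq)
    then have "decomposition [x] [] \<and> x = join [x] []"
      by (simp add: decomposition_def)
    then show ?thesis
      by blast
  next
    case False
    then obtain p q where cut: "x = p @ U # q" "p \<noteq> []" "last p = S" "in_U_group (word_mat p)"
      unfolding cut_free_def by blast
    have IH: "\<exists>As gs. decomposition As gs \<and> y = join As gs"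
      if "length y < length x" "s_framed y" "in_U_group (word_mat y)" for y
      using less.hyps that by blast
    obtain Rs gs Rs' gs' g where "decomposition Rs gs" "decomposition Rs' gs'" "g \<ge> 1"
      "x = join (Rs @ Rs') (gs @ g # gs')"
      using decomposition_split_at_cut[OF less.prems(1) cut less.prems(2) IH] by blast
    then show ?thesis
      using decomposition_append by blast
  qed
qed

lemma primitive_a_word_iff: "primitive_a_word w \<longleftrightarrow> a_word w \<and> cut_free w"
proof (intro iffI conjI)
  assume prim: "primitive_a_word w"
  then show "a_word w"
    by (simp add: primitive_a_word_def)
  then have framed: "s_framed w" and in_U: "in_U_group (word_mat w)"
    using a_word_iff a_word_in_U_group by blast+
  show "cut_free w"
    unfolding cut_free_def
  proof (intro allI impI notI)
    fix p q
    assume "w = p @ U # q" "p \<noteq> []" "last p = S" "in_U_group (word_mat p)"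
    then obtain Rs gs Rs' gs' g where d: "decomposition Rs gs" "decomposition Rs' gs'" "g \<ge> 1"
      "w = join (Rs @ Rs') (gs @ g # gs')"
      using decomposition_split_at_cut[OF framed _ _ _ _ in_U] decomposition_exists by metis
    have "decomposition (Rs @ Rs') (gs @ g # gs')"
      using d(1-3) by (rule decomposition_append)
    moreover have "length (Rs @ Rs') \<ge> 2"
      using d(1,2) by (cases Rs; cases Rs') (auto simp: decomposition_def)
    ultimately show False
      using prim d(4) unfolding primitive_a_word_def decomposition_def by blast
  qed
qed (simp add: primitive_if_cut_free)

lemma primitive_not_proper_prefix:
  assumes "primitive_a_word A" "primitive_a_word B" "A = B @ u # us"
  shows "u \<noteq> U"
proof
  assume "u = U"
  moreover have "B \<noteq> []" "last B = S" "in_U_group (word_mat B)"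
    using assms(2) a_word_in_U_group by (auto simp: primitive_a_word_def a_word_def)
  ultimately show False
    using assms(1,3) unfolding primitive_a_word_iff cut_free_def by blast
qed

lemma primitive_prefix_eq:
  assumes "A @ RA = B @ RB" "RA \<noteq> [] \<longrightarrow> hd RA = U" "RB \<noteq> [] \<longrightarrow> hd RB = U"
    and "primitive_a_word A" "primitive_a_word B"
  shows "A = B"
proof -
  obtain us where "A = B @ us \<and> us @ RA = RB \<or> A @ us = B \<and> RA = us @ RB"
    using assms(1) append_eq_append_conv2 by blast
  then show ?thesis
    using assms(2-5) primitive_not_proper_prefix by (cases us) fastforce+
qed

lemma decomposition_Cons_cases:
  assumes "decomposition (A # As) gs"
  obtains "As = []" "gs = []" "join (A # As) gs = A"
  | g gs' where "As \<noteq> []" "gs = g # gs'" "g \<ge> 1" "decomposition As gs'"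
    "join (A # As) gs = A @ replicate g U @ join As gs'"
proof (cases As)
  case Nil
  then show ?thesis
    using assms that(1) by (simp add: decomposition_def)
next
  case (Cons B Bs)
  then obtain g gs' where "gs = g # gs'"
    using assms by (cases gs) (auto simp: decomposition_def)
  then show ?thesis
    using assms that(2) Cons by (auto simp: decomposition_def)
qed

lemma s_framed_join_decomposition: "decomposition As gs \<Longrightarrow> s_framed (join As gs)"
  unfolding decomposition_def
  by (intro s_framed_join) (auto simp: primitive_a_word_def a_word_iff)

lemma replicate_U_append_eq:
  "replicate g U @ J = replicate h U @ J' \<Longrightarrow> J \<noteq> [] \<Longrightarrow> hd J = S \<Longrightarrow> J' \<noteq> [] \<Longrightarrow> hd J' = S \<Longrightarrow>
    g = h \<and> J = J'"
proof (induction g arbitrary: h)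
  case 0
  then show ?case
    by (cases h) auto
next
  case (Suc g)
  then show ?case
    by (cases h) auto
qed

lemma join_Cons_decomposition:
  assumes "decomposition (A # As) gs"
  obtains R where "join (A # As) gs = A @ R" "R \<noteq> [] \<longrightarrow> hd R = U"
  using assms
proof (cases rule: decomposition_Cons_cases)
  case (2 g gs')
  then show ?thesis
    using that[of "replicate g U @ join As gs'"] by (cases g) auto
qed (use that in simp)

lemma decomposition_hd_eq:
  assumes "decomposition (A # As) gs" "decomposition (B # Bs) hs" "join (A # As) gs = join (B # Bs) hs"
  shows "A = B"
proof -
  obtain RA RB where "join (A # As) gs = A @ RA" "RA \<noteq> [] \<longrightarrow> hd RA = U"
    "join (B # Bs) hs = B @ RB" "RB \<noteq> [] \<longrightarrow> hd RB = U"
    using join_Cons_decomposition assms(1,2) by metis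
  moreover have "primitive_a_word A" "primitive_a_word B"
    using assms(1,2) by (simp_all add: decomposition_def)
  ultimately show ?thesis
    using primitive_prefix_eq assms(3) by metis
qed

lemma decomposition_unique:
  "decomposition As gs \<Longrightarrow> decomposition Bs hs \<Longrightarrow> join As gs = join Bs hs \<Longrightarrow> As = Bs \<and> gs = hs"
proof (induction As arbitrary: gs Bs hs)
  case Nil
  then show ?case
    by (simp add: decomposition_def)
next
  case (Cons A As)
  obtain B Bs' where Bs: "Bs = B # Bs'"
    using Cons.prems(2) by (cases Bs) (auto simp: decomposition_def)
  have "A = B"
    using decomposition_hd_eq Cons.prems by (simp add: Bs)
  have hd_join: "join Cs ks \<noteq> [] \<and> hd (join Cs ks) = S" if "decomposition Cs ks" for Cs ks
    using s_framed_join_decomposition[OF that] by (simp add: s_framed_def)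
  from Cons.prems(1) show ?case
  proof (cases rule: decomposition_Cons_cases)
    case A_single: 1
    from Cons.prems(2)[unfolded Bs] show ?thesis
      by (cases rule: decomposition_Cons_cases) (use A_single Cons.prems(3) \<open>A = B\<close> in \<open>auto simp: Bs\<close>)
  next
    case A_join: (2 g gs')
    from Cons.prems(2)[unfolded Bs] show ?thesis
    proof (cases rule: decomposition_Cons_cases)
      case 1
      then show ?thesis
        using A_join Cons.prems(3) \<open>A = B\<close> by (simp add: Bs)
    next
      case (2 h hs')
      then have "replicate g U @ join As gs' = replicate h U @ join Bs' hs'"
        using A_join Cons.prems(3) \<open>A = B\<close> by (simp add: Bs)
      then have "g = h \<and> join As gs' = join Bs' hs'"
        using replicate_U_append_eq hd_join[OF A_join(4)] hd_join[OF 2(4)] by blast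
      then show ?thesis
        using Cons.IH[OF A_join(4) 2(4)] \<open>A = B\<close> A_join(2) 2(2) by (simp add: Bs)
    qed
  qed
qed

lemma a_word_join_iff: "decomposition As gs \<Longrightarrow> a_word (join As gs) \<longleftrightarrow> 3 dvd sum_list gs"
proof -
  assume d: "decomposition As gs"
  then have "\<forall>A\<in>set As. a_word A"
    by (auto simp: decomposition_def primitive_a_word_def)
  then have "s_framed (join As gs)" "proj_eq (word_mat (join As gs)) (U_pow (sum_list gs))"
    using d s_framed_join_decomposition word_mat_join_proj_eq
    by (auto simp: decomposition_def a_word_iff is_identity_iff_proj_eq)
  then show ?thesis
    by (metis a_word_iff is_identity_iff_proj_eq proj_eq_U_pow_id_iff proj_eq_sym proj_eq_trans
        mod_0_imp_dvd dvd_imp_mod_0)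
qed

section \<open>Counting\<close>

definition compositions :: "nat \<Rightarrow> nat \<Rightarrow> nat list set" where
  "compositions N j = {xs. length xs = j \<and> (\<forall>x\<in>set xs. x \<ge> 1) \<and> sum_list xs = N}"

lemma member_le_sum_list: "x \<in> set xs \<Longrightarrow> (x::nat) \<le> sum_list xs"
  by (induction xs) auto

lemma length_le_sum_list: "\<forall>x\<in>set xs. (x::nat) \<ge> 1 \<Longrightarrow> length xs \<le> sum_list xs"
  by (induction xs) auto

lemma finite_compositions: "finite (compositions N j)"
proof -
  have "compositions N j \<subseteq> {xs. set xs \<subseteq> {0..N} \<and> length xs = j}"
    unfolding compositions_def by (auto dest: member_le_sum_list)
  then show ?thesis
    using finite_lists_length_eq[of "{0..N}" j] finite_subset by blast
qed

lemma card_compositions: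
  assumes "1 \<le> j" "j \<le> N"
  shows "card (compositions N j) = (N - 1) choose (j - 1)"
proof -
  have sum_map_Suc: "sum_list (map Suc l) = sum_list l + length l" for l
    by (induction l) auto
  have "compositions N j = map Suc ` {l. length l = j \<and> sum_list l = N - j}"
  proof (intro set_eqI iffI)
    fix xs
    assume xs: "xs \<in> compositions N j"
    then have "\<forall>x\<in>set xs. x \<ge> 1"
      by (simp add: compositions_def)
    then have "xs = map Suc (map (\<lambda>x. x - 1) xs)"
      by (induction xs) auto
    moreover have "sum_list (map (\<lambda>x. x - 1) xs) = N - j"
      using xs calculation sum_map_Suc[of "map (\<lambda>x. x - 1) xs"] by (auto simp: compositions_def)
    ultimately show "xs \<in> map Suc ` {l. length l = j \<and> sum_list l = N - j}"
      using xs by (intro image_eqI[of _ _ "map (\<lambda>x. x - 1) xs"]) (auto simp: compositions_def)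
  qed (use assms in \<open>auto simp: compositions_def sum_map_Suc\<close>)
  then have "card (compositions N j) = card {l. length l = j \<and> sum_list l = N - j}"
    by (simp add: card_image inj_on_def)
  also have "\<dots> = (N - 1) choose (N - j)"
    using card_length_sum_list[of j "N - j"] assms by simp
  also have "\<dots> = (N - 1) choose (j - 1)"
    using assms binomial_symmetric[of "N - j" "N - 1"] by simp
  finally show ?thesis .
qed

lemma lists_nth_in_Suc:
  "{xs. length xs = Suc s \<and> (\<forall>i<Suc s. xs ! i \<in> F i)} =
    (\<lambda>(x, xs). x # xs) ` (F 0 \<times> {xs. length xs = s \<and> (\<forall>i<s. xs ! i \<in> F (Suc i))})"
proof (intro set_eqI iffI)
  fix ys
  assume ys: "ys \<in> {xs. length xs = Suc s \<and> (\<forall>i<Suc s. xs ! i \<in> F i)}"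
  then obtain y ys' where "ys = y # ys'"
    by (cases ys) auto
  with ys show "ys \<in> (\<lambda>(x, xs). x # xs) ` (F 0 \<times> {xs. length xs = s \<and> (\<forall>i<s. xs ! i \<in> F (Suc i))})"
    by (auto intro!: image_eqI[of _ _ "(y, ys')"])
qed (auto simp: less_Suc_eq_0_disj)

lemma card_lists_nth_in: "card {xs. length xs = s \<and> (\<forall>i<s. xs ! i \<in> F i)} = (\<Prod>i<s. card (F i))"
proof (induction s arbitrary: F)
  case 0
  have "{xs. length xs = 0 \<and> (\<forall>i<0. xs ! i \<in> F i)} = {[]}"
    by auto
  then show ?case
    by simp
next
  case (Suc s)
  have "inj_on (\<lambda>(x, xs). x # xs) (F 0 \<times> {xs. length xs = s \<and> (\<forall>i<s. xs ! i \<in> F (Suc i))})"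
    by (auto simp: inj_on_def)
  then show ?case
    unfolding lists_nth_in_Suc
    by (simp add: card_image card_cartesian_product Suc.IH prod.lessThan_Suc_shift del: prod.lessThan_Suc)
qed

lemma finite_lists_nth_in:
  assumes "\<forall>i<s. finite (F i)"
  shows "finite {xs. length xs = s \<and> (\<forall>i<s. xs ! i \<in> F i)}"
proof -
  have "{xs. length xs = s \<and> (\<forall>i<s. xs ! i \<in> F i)} \<subseteq> {xs. set xs \<subseteq> (\<Union>i<s. F i) \<and> length xs = s}"
    by (fastforce simp: in_set_conv_nth)
  then show ?thesis
    using finite_lists_length_eq[of "\<Union>i<s. F i" s] assms finite_subset by blast
qed

definition a_words :: "nat \<Rightarrow> nat \<Rightarrow> letter list set" where
  "a_words u v = {w. a_word w \<and> count_list w U = u \<and> count_list w S = v}"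

definition prim_words :: "nat \<Rightarrow> nat \<Rightarrow> letter list set" where
  "prim_words u v = {w. primitive_a_word w \<and> count_list w U = u \<and> count_list w S = v}"

definition profiles :: "nat \<Rightarrow> nat \<Rightarrow> nat \<Rightarrow> (nat list \<times> nat list) set" where
  "profiles s N M = {(ns, ms). length ns = s \<and> length ms = s \<and> sum_list ns = N \<and> sum_list ms = M}"

definition prim_lists :: "nat \<Rightarrow> nat \<Rightarrow> nat \<Rightarrow> letter list list set" where
  "prim_lists s N M = {As. length As = s \<and> (\<forall>A\<in>set As. primitive_a_word A) \<and>
     sum_list (map (\<lambda>A. count_list A U) As) = 3 * N \<and> sum_list (map (\<lambda>A. count_list A S) As) = 2 * M}"

lemma pa_count_eq_card: "pa_count u v = card (prim_words u v)"
  by (simp add: pa_count_def prim_words_def)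

lemma finite_prim_words: "finite (prim_words u v)"
proof -
  have "(UNIV :: letter set) = {U, S}"
    using letter.exhaust by auto
  then have "finite (UNIV :: letter set)"
    by (metis finite.emptyI finite.insertI)
  then have "finite {w :: letter list. length w \<le> u + v}"
    using finite_lists_length_le[of "UNIV :: letter set" "u + v"] by simp
  moreover have "prim_words u v \<subseteq> {w. length w \<le> u + v}"
    unfolding prim_words_def by (auto simp: length_eq_count_U_plus_count_S)
  ultimately show ?thesis
    using finite_subset by blast
qed

lemma finite_profiles: "finite (profiles s N M)"
proof -
  have "profiles s N M \<subseteq> {ns. set ns \<subseteq> {0..N} \<and> length ns = s} \<times> {ms. set ms \<subseteq> {0..M} \<and> length ms = s}"
    unfolding profiles_def by (auto dest: member_le_sum_list)
  then show ?thesis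
    by (rule finite_subset) (intro finite_cartesian_product finite_lists_length_eq finite_atLeastAtMost)
qed

lemma sum_list_map_nth: "sum_list (map f xs) = (\<Sum>i<length xs. f (xs ! i))"
  by (simp add: sum_list_sum_nth atLeast0LessThan)

lemma sum_list_map_div:
  assumes "\<forall>A\<in>set As. (c::nat) dvd f A"
  shows "c * sum_list (map (\<lambda>A. f A div c) As) = sum_list (map f As)"
  using assms by (induction As) (auto simp: distrib_left)

definition profile_lists :: "nat \<Rightarrow> nat list \<times> nat list \<Rightarrow> letter list list set" where
  "profile_lists s p = {As. length As = s \<and> (\<forall>i<s. As ! i \<in> prim_words (3 * (fst p ! i)) (2 * (snd p ! i)))}"

lemma prim_lists_in_profile_lists:
  assumes "As \<in> prim_lists s N M"
  obtains p where "p \<in> profiles s N M" "As \<in> profile_lists s p"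
proof -
  have As: "length As = s" "\<forall>A\<in>set As. primitive_a_word A"
    "sum_list (map (\<lambda>A. count_list A U) As) = 3 * N" "sum_list (map (\<lambda>A. count_list A S) As) = 2 * M"
    using assms by (auto simp: prim_lists_def)
  have dvd: "\<forall>A\<in>set As. 3 dvd count_list A U" "\<forall>A\<in>set As. 2 dvd count_list A S"
    using As(2) a_word_counts by (auto simp: primitive_a_word_def)
  define ns where "ns = map (\<lambda>A. count_list A U div 3) As"
  define ms where "ms = map (\<lambda>A. count_list A S div 2) As"
  have "(ns, ms) \<in> profiles s N M"
    using sum_list_map_div[OF dvd(1)] sum_list_map_div[OF dvd(2)] As
    by (simp add: profiles_def ns_def ms_def)
  moreover have "As ! i \<in> prim_words (3 * (ns ! i)) (2 * (ms ! i))" if i: "i < s" for i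
  proof -
    have "As ! i \<in> set As"
      using i As(1) by simp
    moreover have "ns ! i = count_list (As ! i) U div 3" "ms ! i = count_list (As ! i) S div 2"
      using i As(1) by (simp_all add: ns_def ms_def)
    ultimately show ?thesis
      using As(2) dvd by (simp add: prim_words_def)
  qed
  ultimately show ?thesis
    using that[of "(ns, ms)"] As(1) by (simp add: profile_lists_def)
qed

lemma profile_lists_subset_prim_lists:
  assumes "p \<in> profiles s N M"
  shows "profile_lists s p \<subseteq> prim_lists s N M"
proof
  fix As
  assume "As \<in> profile_lists s p"
  then have As: "length As = s" "\<forall>i<s. As ! i \<in> prim_words (3 * (fst p ! i)) (2 * (snd p ! i))"
    by (simp_all add: profile_lists_def)
  have p: "length (fst p) = s" "length (snd p) = s" "sum_list (fst p) = N" "sum_list (snd p) = M"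
    using assms by (auto simp: profiles_def)
  have "sum_list (map (\<lambda>A. count_list A U) As) = (\<Sum>i<s. 3 * (fst p ! i))"
    using As by (simp add: sum_list_map_nth prim_words_def)
  moreover have "sum_list (map (\<lambda>A. count_list A S) As) = (\<Sum>i<s. 2 * (snd p ! i))"
    using As by (simp add: sum_list_map_nth prim_words_def)
  moreover have "\<forall>A\<in>set As. primitive_a_word A"
    using As by (auto simp: in_set_conv_nth prim_words_def)
  ultimately show "As \<in> prim_lists s N M"
    using p As(1) sum_list_map_nth[of "\<lambda>x. x" "fst p"] sum_list_map_nth[of "\<lambda>x. x" "snd p"]
    by (simp add: prim_lists_def flip: sum_distrib_left)
qed

lemma prim_lists_eq_UN_profile_lists: "prim_lists s N M = (\<Union>p\<in>profiles s N M. profile_lists s p)"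
proof (intro equalityI subsetI)
  fix As
  assume "As \<in> prim_lists s N M"
  then obtain p where "p \<in> profiles s N M" "As \<in> profile_lists s p"
    by (rule prim_lists_in_profile_lists)
  then show "As \<in> (\<Union>p\<in>profiles s N M. profile_lists s p)"
    by blast
qed (use profile_lists_subset_prim_lists in blast)

lemma profile_lists_disjoint:
  assumes "length (fst p) = s" "length (snd p) = s" "length (fst p') = s" "length (snd p') = s" "p \<noteq> p'"
  shows "profile_lists s p \<inter> profile_lists s p' = {}"
proof (rule equals0I)
  fix As
  assume "As \<in> profile_lists s p \<inter> profile_lists s p'"
  then have "\<forall>i<s. fst p ! i = fst p' ! i \<and> snd p ! i = snd p' ! i"
    by (auto simp: profile_lists_def prim_words_def)
  then have "fst p = fst p'" "snd p = snd p'"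
    using assms(1-4) by (auto intro: nth_equalityI)
  then show False
    using assms(5) by (simp add: prod_eq_iff)
qed

lemma finite_profile_lists: "finite (profile_lists s p)"
  unfolding profile_lists_def by (simp add: finite_prim_words finite_lists_nth_in)

lemma card_prim_lists:
  "card (prim_lists s N M) = (\<Sum>p\<in>profiles s N M. \<Prod>i<s. pa_count (3 * (fst p ! i)) (2 * (snd p ! i)))"
proof -
  have "card (prim_lists s N M) = (\<Sum>p\<in>profiles s N M. card (profile_lists s p))"
    unfolding prim_lists_eq_UN_profile_lists
  proof (rule card_UN_disjoint)
    show "\<forall>p\<in>profiles s N M. \<forall>p'\<in>profiles s N M. p \<noteq> p' \<longrightarrow> profile_lists s p \<inter> profile_lists s p' = {}"
      by (intro ballI impI profile_lists_disjoint) (auto simp: profiles_def)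
  qed (simp_all add: finite_profiles finite_profile_lists)
  then show ?thesis
    by (simp add: profile_lists_def card_lists_nth_in pa_count_eq_card)
qed

lemma finite_prim_lists: "finite (prim_lists s N M)"
  unfolding prim_lists_eq_UN_profile_lists
  by (intro finite_UN_I finite_profiles finite_profile_lists)

definition decompositions :: "nat \<Rightarrow> nat \<Rightarrow> (nat list \<times> letter list list) set" where
  "decompositions u v = {(gs, As). decomposition As gs \<and> join As gs \<in> a_words u v}"

lemma a_words_eq_image_decompositions: "a_words u v = (\<lambda>(gs, As). join As gs) ` decompositions u v"
proof (intro set_eqI iffI)
  fix w
  assume w: "w \<in> a_words u v"
  then have "s_framed w" "in_U_group (word_mat w)"
    using a_word_iff a_word_in_U_group by (auto simp: a_words_def)
  then obtain As gs where "decomposition As gs" "w = join As gs"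
    using decomposition_exists by blast
  then show "w \<in> (\<lambda>(gs, As). join As gs) ` decompositions u v"
    using w by (auto simp: decompositions_def intro!: image_eqI[of _ _ "(gs, As)"])
qed (auto simp: decompositions_def)

lemma inj_on_join_decompositions: "inj_on (\<lambda>(gs, As). join As gs) (decompositions u v)"
  by (auto simp: inj_on_def decompositions_def dest: decomposition_unique)

lemma decompositions_subset:
  "decompositions (3 * n) (2 * m) \<subseteq> (\<lambda>A. ([], [A])) ` prim_words (3 * n) (2 * m) \<union>
    (\<Union>k\<in>{1..n}. \<Union>s\<in>{2..3 * k + 1}. compositions (3 * k) (s - 1) \<times> prim_lists s (n - k) m)"
proof
  fix p
  assume "p \<in> decompositions (3 * n) (2 * m)"
  then obtain gs As where p: "p = (gs, As)" and d: "decomposition As gs"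
    and w: "a_word (join As gs)" "count_list (join As gs) U = 3 * n" "count_list (join As gs) S = 2 * m"
    by (auto simp: decompositions_def a_words_def)
  define s where "s = length As"
  have gs: "length gs = s - 1" "\<forall>g\<in>set gs. g \<ge> 1"
    using d by (simp_all add: decomposition_def s_def)
  show "p \<in> (\<lambda>A. ([], [A])) ` prim_words (3 * n) (2 * m) \<union>
    (\<Union>k\<in>{1..n}. \<Union>s\<in>{2..3 * k + 1}. compositions (3 * k) (s - 1) \<times> prim_lists s (n - k) m)"
  proof (cases "s = 1")
    case True
    then obtain A where "As = [A]" "gs = []"
      using gs(1) unfolding s_def by (cases As) auto
    then show ?thesis
      using d w by (auto simp: p decomposition_def prim_words_def)
  next
    case False
    moreover have "s \<noteq> 0"
      using d by (simp add: decomposition_def s_def)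
    ultimately have s2: "s \<ge> 2"
      by linarith
    obtain k where k: "sum_list gs = 3 * k"
      using a_word_join_iff[OF d] w(1) by blast
    have "s - 1 \<le> 3 * k"
      using length_le_sum_list[OF gs(2)] gs(1) k by simp
    then have k_bounds: "1 \<le> k" "s \<le> 3 * k + 1"
      using s2 by linarith+
    have counts: "sum_list (map (\<lambda>A. count_list A U) As) + 3 * k = 3 * n"
      "sum_list (map (\<lambda>A. count_list A S) As) = 2 * m"
      using w(2,3) count_list_join[of gs As] gs(1) k by (simp_all add: s_def)
    then have "k \<le> n"
      by linarith
    moreover have "gs \<in> compositions (3 * k) (s - 1)"
      using gs k by (simp add: compositions_def)
    moreover have "As \<in> prim_lists s (n - k) m"
      using d counts by (auto simp: prim_lists_def decomposition_def s_def diff_mult_distrib2)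
    ultimately show ?thesis
      using k_bounds s2 by (auto simp: p)
  qed
qed

lemma decompositions_supset:
  "(\<lambda>A. ([], [A])) ` prim_words (3 * n) (2 * m) \<union>
    (\<Union>k\<in>{1..n}. \<Union>s\<in>{2..3 * k + 1}. compositions (3 * k) (s - 1) \<times> prim_lists s (n - k) m)
    \<subseteq> decompositions (3 * n) (2 * m)"
proof (intro Un_least subsetI)
  fix p :: "nat list \<times> letter list list"
  assume "p \<in> (\<lambda>A. ([], [A])) ` prim_words (3 * n) (2 * m)"
  then show "p \<in> decompositions (3 * n) (2 * m)"
    by (auto simp: decompositions_def decomposition_def a_words_def prim_words_def primitive_a_word_iff)
next
  fix p
  assume "p \<in> (\<Union>k\<in>{1..n}. \<Union>s\<in>{2..3 * k + 1}. compositions (3 * k) (s - 1) \<times> prim_lists s (n - k) m)"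
  then obtain k s where ks: "k \<in> {1..n}" "s \<in> {2..3 * k + 1}"
    and "p \<in> compositions (3 * k) (s - 1) \<times> prim_lists s (n - k) m"
    by blast
  then obtain gs As where p: "p = (gs, As)"
    and gs: "gs \<in> compositions (3 * k) (s - 1)" and As: "As \<in> prim_lists s (n - k) m"
    by blast
  have d: "decomposition As gs"
    using gs As ks(2) by (auto simp: decomposition_def compositions_def prim_lists_def)
  moreover have "a_word (join As gs)"
    using a_word_join_iff[OF d] gs by (simp add: compositions_def)
  moreover have "count_list (join As gs) U = 3 * n" "count_list (join As gs) S = 2 * m"
    using count_list_join[of gs As] gs As ks(1)
    by (simp_all add: compositions_def prim_lists_def diff_mult_distrib2)
  ultimately show "p \<in> decompositions (3 * n) (2 * m)"
    by (simp add: p decompositions_def a_words_def)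
qed

lemma decompositions_eq:
  "decompositions (3 * n) (2 * m) = (\<lambda>A. ([], [A])) ` prim_words (3 * n) (2 * m) \<union>
    (\<Union>k\<in>{1..n}. \<Union>s\<in>{2..3 * k + 1}. compositions (3 * k) (s - 1) \<times> prim_lists s (n - k) m)"
  by (rule equalityI[OF decompositions_subset decompositions_supset])

lemma card_decompositions:
  "card (decompositions (3 * n) (2 * m)) = pa_count (3 * n) (2 * m) +
    (\<Sum>k\<in>{1..n}. \<Sum>s\<in>{2..3 * k + 1}. card (compositions (3 * k) (s - 1)) * card (prim_lists s (n - k) m))"
proof -
  define multi where "multi k = (\<Union>s\<in>{2..3 * k + 1}. compositions (3 * k) (s - 1) \<times> prim_lists s (n - k) m)"
    for k
  have fin: "finite (compositions N j \<times> prim_lists s N' M)" for N j s N' M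
    by (simp add: finite_compositions finite_prim_lists)
  have card_multi: "card (multi k) = (\<Sum>s\<in>{2..3 * k + 1}. card (compositions (3 * k) (s - 1)) * card (prim_lists s (n - k) m))"
    for k
    unfolding multi_def
    by (subst card_UN_disjoint) (auto simp: fin card_cartesian_product, auto simp: compositions_def)
  have finite_multi: "finite (multi k)" for k
    by (simp add: multi_def fin)
  have disjoint: "(\<lambda>A. ([] :: nat list, [A])) ` prim_words (3 * n) (2 * m) \<inter> (\<Union>k\<in>{1..n}. multi k) = {}"
    by (auto simp: multi_def compositions_def)
  have "card (decompositions (3 * n) (2 * m)) =
      card ((\<lambda>A. ([] :: nat list, [A])) ` prim_words (3 * n) (2 * m)) + card (\<Union>k\<in>{1..n}. multi k)"
    unfolding decompositions_eq multi_def[symmetric]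
    by (rule card_Un_disjoint[OF _ _ disjoint]) (simp_all add: finite_prim_words finite_multi)
  also have "card ((\<lambda>A. ([] :: nat list, [A])) ` prim_words (3 * n) (2 * m)) = pa_count (3 * n) (2 * m)"
    by (simp add: card_image inj_on_def pa_count_eq_card)
  also have "card (\<Union>k\<in>{1..n}. multi k) = (\<Sum>k\<in>{1..n}. card (multi k))"
    by (rule card_UN_disjoint) (auto simp: finite_multi, auto simp: multi_def compositions_def)
  finally show ?thesis
    by (simp add: card_multi)
qed

theorem proposition4:
  fixes n m :: nat
  shows "a_count (3*n) (2*m) =
    pa_count (3*n) (2*m) +
    (\<Sum>k\<in>{1..n}. \<Sum>s\<in>{2..3*k+1}. ((3*k - 1) choose (s - 2)) *
       (\<Sum>p\<in>{(ns, ms). length ns = s \<and> length ms = s \<and>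
                        sum_list ns = n - k \<and> sum_list ms = m}.
          \<Prod>i<s. pa_count (3 * (fst p ! i)) (2 * (snd p ! i))))"
proof -
  have "a_count (3 * n) (2 * m) = card (decompositions (3 * n) (2 * m))"
    using card_image[OF inj_on_join_decompositions]
    by (simp add: a_count_def flip: a_words_def a_words_eq_image_decompositions)
  also have "\<dots> = pa_count (3 * n) (2 * m) +
      (\<Sum>k\<in>{1..n}. \<Sum>s\<in>{2..3 * k + 1}. card (compositions (3 * k) (s - 1)) * card (prim_lists s (n - k) m))"
    by (rule card_decompositions)
  also have "\<dots> = pa_count (3 * n) (2 * m) +
      (\<Sum>k\<in>{1..n}. \<Sum>s\<in>{2..3 * k + 1}. ((3 * k - 1) choose (s - 2)) *
         (\<Sum>p\<in>profiles s (n - k) m. \<Prod>i<s. pa_count (3 * (fst p ! i)) (2 * (snd p ! i))))"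
    by (intro arg_cong2[where f = "(+)"] refl sum.cong)
      (auto simp: card_compositions card_prim_lists numeral_2_eq_2)
  finally show ?thesis
    by (simp add: profiles_def)
qed

end
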